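(* Let $A$ be a finite set and let $X \subset A^{\mathbb Z}$ be a W-subshift. Then the set of periodic configurations of $X$ is dense in $X$.
   Context: A subshift of $A^{\mathbb Z}$ is a closed (for the product of discrete topologies) shift-invariant subset; a configuration is periodic if its orbit under the shift $(gx)(h)=x(h-g)$ is finite. $L(X)$ is the set of finite words (including the empty word) appearing as $x(i)x(i+1)\cdots x(j)$ ($i\le j$) in some $x\in X$; $|w|$ is word length. $X$ is a W-subshift if there is an integer $n_0\ge0$ such that for all $u,v\in L(X)$ there is $c\in L(X)$ with $|c|\le n_0$ and $ucv\in L(X)$. *)

theory Defs
  imports "HOL-Analysis.Analysis"
begin

definition fullshift_top :: "'a set \<Rightarrow> (int \<Rightarrow> 'a) topology" where
  "fullshift_top A = product_topology (\<lambda>_. discrete_topology A) UNIV"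

definition shift :: "int \<Rightarrow> (int \<Rightarrow> 'a) \<Rightarrow> (int \<Rightarrow> 'a)" where
  "shift g x = (\<lambda>h. x (h - g))"

definition subshift :: "'a set \<Rightarrow> (int \<Rightarrow> 'a) set \<Rightarrow> bool" where
  "subshift A X \<longleftrightarrow> X \<subseteq> topspace (fullshift_top A) \<and>
     closedin (fullshift_top A) X \<and> (\<forall>g. \<forall>x\<in>X. shift g x \<in> X)"

definition periodic :: "(int \<Rightarrow> 'a) \<Rightarrow> bool" where
  "periodic x \<longleftrightarrow> finite (range (\<lambda>g. shift g x))"

definition language :: "(int \<Rightarrow> 'a) set \<Rightarrow> 'a list set" where
  "language X = {[]} \<union>
     {w. \<exists>x\<in>X. \<exists>i. w = map (\<lambda>k. x (i + int k)) [0..<length w]}"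

definition W_subshift :: "'a set \<Rightarrow> (int \<Rightarrow> 'a) set \<Rightarrow> bool" where
  "W_subshift A X \<longleftrightarrow> subshift A X \<and>
     (\<exists>n0::nat. \<forall>u\<in>language X. \<forall>v\<in>language X.
        \<exists>c\<in>language X. length c \<le> n0 \<and> u @ c @ v \<in> language X)"

end

theory Submission
  imports Defs "HOL-Library.Sublist"
begin

text \<open>
  Let \<open>u\<close> be a central window of \<open>x \<in> X\<close>. Call \<open>(w, c, v)\<close> synchronizing if every word of the
  language ending in \<open>w\<close> can be joined by \<open>c\<close> to every word of the language starting with \<open>v\<close>.
  Such a triple exists with \<open>v\<close> extending \<open>u\<close>: otherwise each of the finitely many connectors of
  length \<open>\<le> n\<^sub>0\<close> can be defeated in turn by extending the current pair \<open>(w, v)\<close> outwards, and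
  the final pair has no short connector, contradicting the W-property. With \<open>v e w\<close> in the
  language, all powers of \<open>q = v e w c\<close> are in the language, so the periodic configuration
  \<open>q\<^sup>\<infinity>\<close> lies in the closed shift-invariant set \<open>X\<close>; suitably shifted, it agrees with \<open>x\<close> on the window.
\<close>

definition window :: "(int \<Rightarrow> 'a) \<Rightarrow> int \<Rightarrow> nat \<Rightarrow> 'a list" where
  "window x i n = map (\<lambda>k. x (i + int k)) [0..<n]"

lemma length_window [simp]: "length (window x i n) = n"
  by (simp add: window_def)

lemma nth_window [simp]: "k < n \<Longrightarrow> window x i n ! k = x (i + int k)"
  by (simp add: window_def)

lemma language_iff_window:
  "w \<in> language X \<longleftrightarrow> w = [] \<or> (\<exists>x\<in>X. \<exists>i. w = window x i (length w))"
  by (auto simp: language_def window_def)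

lemma window_in_language: "x \<in> X \<Longrightarrow> window x i n \<in> language X"
  by (auto simp: language_iff_window)

lemma window_eq_imp_agree:
  assumes "window z (- int N) (2 * N + 1) = window y (- int N) (2 * N + 1)" and "\<bar>h\<bar> \<le> int N"
  shows "z h = y h"
proof -
  define k where "k = nat (h + int N)"
  have "k < 2 * N + 1" and "h = - int N + int k"
    using assms(2) by (auto simp: k_def)
  then show ?thesis
    using arg_cong[OF assms(1), of "\<lambda>w. w ! k"] by simp
qed

lemma language_factor:
  assumes "a @ b @ d \<in> language X"
  shows "b \<in> language X"
proof (cases "b = []")
  case False
  then obtain x i where "x \<in> X" and w: "a @ b @ d = window x i (length (a @ b @ d))"
    using assms by (auto simp: language_iff_window)
  have "b = window x (i + int (length a)) (length b)"
  proof (rule nth_equalityI)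
    fix k assume "k < length b"
    then show "b ! k = window x (i + int (length a)) (length b) ! k"
      using arg_cong[OF w, of "\<lambda>w. w ! (length a + k)"] by (simp add: nth_append add.assoc)
  qed simp
  then show ?thesis
    using window_in_language[OF \<open>x \<in> X\<close>] by metis
qed (simp add: language_iff_window)

lemma language_subset_lists:
  assumes "subshift A X" and "w \<in> language X"
  shows "set w \<subseteq> A"
proof
  fix a assume "a \<in> set w"
  then obtain x i where "x \<in> X" and "w = window x i (length w)"
    using assms(2) by (auto simp: language_iff_window)
  moreover obtain k where "k < length w" and "a = w ! k"
    using \<open>a \<in> set w\<close> by (auto simp: in_set_conv_nth)
  ultimately have "a = x (i + int k)"
    by (metis nth_window)
  moreover have "x \<in> topspace (fullshift_top A)"
    using \<open>x \<in> X\<close> assms(1) by (auto simp: subshift_def)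
  ultimately show "a \<in> A"
    by (auto simp: fullshift_top_def)
qed

lemma language_realized_at:
  assumes "subshift A X" and "w \<in> language X" and "w \<noteq> []"
  obtains z where "z \<in> X" and "window z i (length w) = w"
proof -
  obtain x j where "x \<in> X" and w: "w = window x j (length w)"
    using assms(2,3) by (auto simp: language_iff_window)
  have "shift (i - j) x \<in> X"
    using assms(1) \<open>x \<in> X\<close> by (auto simp: subshift_def)
  moreover have "window (shift (i - j) x) i (length w) = w"
    by (subst (2) w) (simp add: window_def shift_def algebra_simps)
  ultimately show ?thesis
    by (rule that)
qed

lemma limitin_fullshift_if_agree:
  assumes "\<And>N. z N \<in> topspace (fullshift_top A)"
    and "\<And>N h. \<bar>h\<bar> \<le> int N \<Longrightarrow> z N h = y h"
  shows "limitin (fullshift_top A) z y sequentially"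
  unfolding fullshift_top_def
proof (subst limitin_componentwise, intro conjI ballI)
  show "y \<in> extensional UNIV"
    by simp
  show "\<forall>\<^sub>F N in sequentially. z N \<in> topspace (product_topology (\<lambda>_. discrete_topology A) UNIV)"
    using assms(1) by (simp add: fullshift_top_def)
  fix h :: int
  have "\<forall>\<^sub>F N in sequentially. z N h = y h"
    using assms(2) by (intro eventually_sequentiallyI[of "nat \<bar>h\<bar>"]) auto
  moreover have "y h \<in> A"
    using assms(1)[of "nat \<bar>h\<bar>"] assms(2)[of h "nat \<bar>h\<bar>"] by (simp add: fullshift_top_def PiE_iff) metis
  ultimately show "limitin (discrete_topology A) (\<lambda>N. z N h) (y h) sequentially"
    unfolding limitin_def by (auto elim: eventually_mono)
qed

lemma in_fullshift_closure_ofI: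
  assumes "S \<subseteq> topspace (fullshift_top A)"
    and "\<And>N. \<exists>z\<in>S. \<forall>h. \<bar>h\<bar> \<le> int N \<longrightarrow> z h = y h"
  shows "y \<in> fullshift_top A closure_of S"
proof -
  obtain z where z: "\<And>N. z N \<in> S \<and> (\<forall>h. \<bar>h\<bar> \<le> int N \<longrightarrow> z N h = y h)"
    using assms(2) by metis
  have "limitin (fullshift_top A) z y sequentially"
    using z assms(1) by (intro limitin_fullshift_if_agree) auto
  then show ?thesis
    by (rule limitin_closedin) (use z closure_of_subset[OF assms(1)] in \<open>auto intro: always_eventually\<close>)
qed

definition synchronizing :: "(int \<Rightarrow> 'a) set \<Rightarrow> 'a list \<Rightarrow> 'a list \<Rightarrow> 'a list \<Rightarrow> bool" where
  "synchronizing X w c v \<longleftrightarrow>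
     (\<forall>s\<in>language X. \<forall>t\<in>language X. suffix w s \<longrightarrow> prefix v t \<longrightarrow> s @ c @ t \<in> language X)"

lemma pair_avoiding_connectors:
  assumes "u \<in> language X" and "finite C"
    and "\<forall>c\<in>C. \<forall>w v. w \<in> language X \<longrightarrow> v \<in> language X \<longrightarrow> prefix u v \<longrightarrow>
           \<not> synchronizing X w c v"
  shows "\<exists>w v. w \<in> language X \<and> v \<in> language X \<and> prefix u v \<and>
           (\<forall>c\<in>C. w @ c @ v \<notin> language X)"
  using assms(2,3)
proof (induction C rule: finite_induct)
  case empty
  show ?case
    using assms(1) by (auto simp: language_iff_window)
next
  case (insert c C)
  then obtain w v where "w \<in> language X" "v \<in> language X" "prefix u v"
    and avoid: "\<forall>c\<in>C. w @ c @ v \<notin> language X"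
    by auto
  then obtain s t where "s \<in> language X" "t \<in> language X" "suffix w s" "prefix v t"
    and "s @ c @ t \<notin> language X"
    using insert.prems unfolding synchronizing_def by blast
  have "s @ c' @ t \<notin> language X" if "c' \<in> C" for c'
  proof
    assume "s @ c' @ t \<in> language X"
    moreover obtain s0 t0 where "s = s0 @ w" and "t = v @ t0"
      using \<open>suffix w s\<close> \<open>prefix v t\<close> by (auto simp: prefix_def suffix_def)
    ultimately have "w @ c' @ v \<in> language X"
      using language_factor[of s0 "w @ c' @ v" t0] by simp
    with avoid that show False
      by blast
  qed
  then show ?case
    using \<open>s @ c @ t \<notin> language X\<close> \<open>s \<in> language X\<close> \<open>t \<in> language X\<close>
      prefix_order.trans[OF \<open>prefix u v\<close> \<open>prefix v t\<close>] by blast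
qed

lemma W_subshift_synchronizing:
  assumes "finite A" and "W_subshift A X" and "u \<in> language X"
  obtains w c v where "w \<in> language X" and "v \<in> language X" and "prefix u v"
    and "synchronizing X w c v"
proof (rule ccontr)
  assume no_sync: \<open>\<not> thesis\<close>
  obtain n0 where W: "\<forall>w\<in>language X. \<forall>v\<in>language X.
      \<exists>c\<in>language X. length c \<le> n0 \<and> w @ c @ v \<in> language X"
    using assms(2) by (auto simp: W_subshift_def)
  define C where "C = {c. set c \<subseteq> A \<and> length c \<le> n0}"
  have "finite C"
    using finite_lists_length_le[OF assms(1)] by (simp add: C_def)
  moreover have "\<forall>c\<in>C. \<forall>w v. w \<in> language X \<longrightarrow> v \<in> language X \<longrightarrow> prefix u v \<longrightarrow>
      \<not> synchronizing X w c v"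
    using that no_sync by blast
  ultimately obtain w v where "w \<in> language X" "v \<in> language X"
    and avoid: "\<forall>c\<in>C. w @ c @ v \<notin> language X"
    using pair_avoiding_connectors[OF assms(3)] by blast
  then obtain c where "c \<in> language X" "length c \<le> n0" "w @ c @ v \<in> language X"
    using W by blast
  moreover have "set c \<subseteq> A"
    using assms(2) language_subset_lists[OF _ \<open>c \<in> language X\<close>] by (simp add: W_subshift_def)
  ultimately show False
    using avoid by (auto simp: C_def)
qed

lemma synchronizing_powers_in_language:
  assumes "synchronizing X w c v" and "p \<in> language X" and "prefix v p" and "suffix w p"
  shows "concat (replicate K (p @ c)) @ p \<in> language X"
proof (induction K)
  case 0
  show ?case
    using assms(2) by simp
next
  case (Suc K)
  have "suffix w (concat (replicate K (p @ c)) @ p)"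
    using assms(4) by (auto simp: suffix_def)
  then have "(concat (replicate K (p @ c)) @ p) @ c @ p \<in> language X"
    using assms(1-3) Suc.IH unfolding synchronizing_def by blast
  moreover have "concat (replicate (Suc K) (p @ c)) = concat (replicate K (p @ c)) @ p @ c"
    by (simp flip: replicate_append_same)
  ultimately show ?case
    by simp
qed

definition periodic_config :: "'a list \<Rightarrow> int \<Rightarrow> 'a" where
  "periodic_config q = (\<lambda>h. q ! nat (h mod int (length q)))"

lemma periodic_config_nth: "k < length q \<Longrightarrow> periodic_config q (int k) = q ! k"
  by (simp add: periodic_config_def)

lemma periodic_periodic_config:
  assumes "q \<noteq> []"
  shows "periodic (periodic_config q)"
proof -
  let ?m = "int (length q)"
  have shift_mod: "shift g (periodic_config q) = shift (g mod ?m) (periodic_config q)" for g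
    by (simp add: shift_def periodic_config_def mod_diff_right_eq)
  have "shift g (periodic_config q) \<in> (\<lambda>g. shift g (periodic_config q)) ` {0..<?m}" for g
  proof -
    have "g mod ?m \<in> {0..<?m}"
      using assms by simp
    then show ?thesis
      by (subst shift_mod) (rule imageI)
  qed
  then have "range (\<lambda>g. shift g (periodic_config q)) \<subseteq> (\<lambda>g. shift g (periodic_config q)) ` {0..<?m}"
    by blast
  then show ?thesis
    unfolding periodic_def by (rule finite_subset) simp
qed

lemma periodic_shift:
  assumes "periodic x"
  shows "periodic (shift g x)"
proof -
  have "shift g' (shift g x) = shift (g' + g) x" for g'
    by (simp add: shift_def algebra_simps)
  then have "range (\<lambda>g'. shift g' (shift g x)) \<subseteq> range (\<lambda>g. shift g x)"
    by auto
  then show ?thesis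
    using assms unfolding periodic_def by (rule finite_subset)
qed

lemma nth_concat_replicate:
  "j < K * length q \<Longrightarrow> concat (replicate K q) ! j = q ! (j mod length q)"
proof (induction K arbitrary: j)
  case (Suc K)
  show ?case
  proof (cases "j < length q")
    case False
    then have "concat (replicate K q) ! (j - length q) = q ! ((j - length q) mod length q)"
      using Suc by (intro Suc.IH) simp
    then show ?thesis
      using False by (simp add: nth_append le_mod_geq)
  qed (simp add: nth_append)
qed simp

lemma window_periodic_config:
  assumes "q \<noteq> []"
  shows "window (periodic_config q) i n =
           take n (drop (nat (i mod int (length q))) (concat (replicate (Suc n) q)))"
    (is "_ = take n (drop ?r ?Q)")
proof (rule nth_equalityI)
  have "?r < length q"
    using assms by (simp add: nat_less_iff)
  moreover have "n \<le> n * length q"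
    using assms by (simp add: Suc_le_eq)
  moreover have len: "length ?Q = Suc n * length q" "Suc n * length q = length q + n * length q"
    by (simp_all add: length_concat sum_list_replicate del: replicate_Suc)
  ultimately have bound: "?r + n \<le> length ?Q"
    by linarith
  then show "length (window (periodic_config q) i n) = length (take n (drop ?r ?Q))"
    by simp
  fix k assume "k < length (window (periodic_config q) i n)"
  then have "k < n"
    by simp
  have "int ((?r + k) mod length q) = (i + int k) mod int (length q)"
    using assms by (simp add: of_nat_mod mod_add_left_eq)
  then have "nat ((i + int k) mod int (length q)) = (?r + k) mod length q"
    by (metis nat_int)
  moreover have "take n (drop ?r ?Q) ! k = ?Q ! (?r + k)"
    using \<open>k < n\<close> bound by (simp del: replicate_Suc)
  moreover have "?Q ! (?r + k) = q ! ((?r + k) mod length q)"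
    using \<open>k < n\<close> bound len by (intro nth_concat_replicate) linarith
  ultimately show "window (periodic_config q) i n ! k = take n (drop ?r ?Q) ! k"
    using \<open>k < n\<close> by (simp add: periodic_config_def del: replicate_Suc)
qed

lemma periodic_config_in_subshift:
  assumes "subshift A X" and "q \<noteq> []" and "\<And>K. concat (replicate K q) \<in> language X"
  shows "periodic_config q \<in> X"
proof -
  have "X \<subseteq> topspace (fullshift_top A)" and "closedin (fullshift_top A) X"
    using assms(1) by (auto simp: subshift_def)
  moreover have "\<exists>z\<in>X. \<forall>h. \<bar>h\<bar> \<le> int N \<longrightarrow> z h = periodic_config q h" for N
  proof -
    let ?\<omega> = "window (periodic_config q) (- int N) (2 * N + 1)"
    have "?\<omega> \<in> language X"
      using assms(2,3) window_periodic_config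
      by (metis append_take_drop_id language_factor)
    moreover have "?\<omega> \<noteq> []"
      by (metis length_window add_is_0 list.size(3) one_neq_zero)
    ultimately obtain z where "z \<in> X" and "window z (- int N) (2 * N + 1) = ?\<omega>"
      using language_realized_at[OF assms(1)] by (metis length_window)
    then show ?thesis
      using window_eq_imp_agree by blast
  qed
  ultimately show ?thesis
    using in_fullshift_closure_ofI[of X A] closure_of_closedin by metis
qed

lemma W_subshift_periodic_approximation:
  assumes "finite A" and "W_subshift A X" and "x \<in> X"
  shows "\<exists>y\<in>X. periodic y \<and> (\<forall>h. \<bar>h\<bar> \<le> int N \<longrightarrow> y h = x h)"
proof -
  have X: "subshift A X"
    using assms(2) by (simp add: W_subshift_def)
  define u where "u = window x (- int N) (2 * N + 1)"
  obtain w c v where "w \<in> language X" "v \<in> language X" "prefix u v" and sync: "synchronizing X w c v"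
    using W_subshift_synchronizing[OF assms(1,2)] window_in_language[OF assms(3)] u_def by metis
  then obtain e where p: "v @ e @ w \<in> language X"
    using assms(2) unfolding W_subshift_def by blast
  define q where "q = (v @ e @ w) @ c"
  have powers: "concat (replicate K q) \<in> language X" for K
  proof -
    have "concat (replicate K q) @ (v @ e @ w) \<in> language X"
      using synchronizing_powers_in_language[OF sync p] by (simp add: q_def prefix_def suffix_def)
    then show ?thesis
      using language_factor[of "[]" "concat (replicate K q)" "v @ e @ w"] by simp
  qed
  obtain r where q: "q = u @ r"
    using \<open>prefix u v\<close> by (auto simp: q_def prefix_def)
  then have "length q > 0"
    by (simp add: u_def)
  then have "q \<noteq> []"
    by auto
  \<comment> \<open>the shift moves the copy of \<open>u\<close> at the start of \<open>q\<close> to the positions \<open>-N..N\<close>\<close>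
  define y where "y = shift (- int N) (periodic_config q)"
  have "y \<in> X"
    using periodic_config_in_subshift[OF X \<open>q \<noteq> []\<close> powers] X by (auto simp: subshift_def y_def)
  moreover have "periodic y"
    unfolding y_def by (intro periodic_shift periodic_periodic_config \<open>q \<noteq> []\<close>)
  moreover have "window y (- int N) (2 * N + 1) = u"
  proof (rule nth_equalityI)
    fix k assume "k < length (window y (- int N) (2 * N + 1))"
    then show "window y (- int N) (2 * N + 1) ! k = u ! k"
      by (simp add: y_def shift_def q periodic_config_nth nth_append u_def)
  qed (simp add: u_def)
  ultimately show ?thesis
    unfolding u_def using window_eq_imp_agree by blast
qed

theorem theorem5p1:
  fixes A :: "'a set" and X :: "(int \<Rightarrow> 'a) set"
  assumes "finite A" and "W_subshift A X"
  shows "X \<subseteq> (fullshift_top A) closure_of {x \<in> X. periodic x}"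
proof
  fix x assume "x \<in> X"
  have "{x \<in> X. periodic x} \<subseteq> topspace (fullshift_top A)"
    using assms(2) by (auto simp: W_subshift_def subshift_def)
  then show "x \<in> fullshift_top A closure_of {x \<in> X. periodic x}"
    using W_subshift_periodic_approximation[OF assms \<open>x \<in> X\<close>]
    by (intro in_fullshift_closure_ofI) (simp_all add: Bex_def)
qed

end
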